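(* Let $\ell\ge1$. Let $c_i=(c_{i,0},\dots,c_{i,\ell_i-1})$ and $c_j=(c_{j,0},\dots,c_{j,\ell_j-1})$ be two distinct codewords of a binary prefix-free code with lengths $\ell_i\le\ell_j$, and let $y_i=\sum_{t=0}^{\ell_i-1}c_{i,t}x^t$ and $y_j=\sum_{t=0}^{\ell_j-1}c_{j,t}x^t$ in $F_2[x]$. Let $r_0\in F_2[[x]]$ be arbitrary, let $s\in F_2[x]$ have degree less than $\ell$, and define the shares $$Z_i\equiv r_0+s\,y_i\pmod{x^{\ell_i+\ell-1}},\qquad Z_j\equiv r_0+s\,y_j\pmod{x^{\ell_j+\ell-1}},$$ taken as polynomials of degree less than $\ell_i+\ell-1$ and $\ell_j+\ell-1$ respectively. Let $L_{i,j}$ be the largest integer with $x^{L_{i,j}}\mid (y_i-y_j)$. Then $L_{i,j}\le \ell_i-1$, and $s$ is the unique polynomial of degree less than $\ell$ satisfying $$s\,(y_i-y_j)\equiv Z_i-Z_j\pmod{x^{\ell_i+\ell-1}};$$ explicitly, $$s\equiv\frac{(Z_i-Z_j)/x^{L_{i,j}}}{(y_i-y_j)/x^{L_{i,j}}}\pmod{x^{\ell}},$$ where the denominator has nonzero constant term and the quotient means multiplication by its inverse in $F_2[x]/(x^\ell)$.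
   Context: A binary prefix-free code is a set of finite binary strings (codewords) none of which is a prefix of another. $F_2[[x]]$ denotes formal power series over $F_2$; reduction of a power series modulo $x^N$ means truncation to its terms of degree less than $N$. *)

theory Defs
  imports "HOL-Library.Z2" "HOL-Library.Sublist"
    "HOL-Computational_Algebra.Polynomial" "HOL-Computational_Algebra.Formal_Power_Series"
    "HOL-Computational_Algebra.Polynomial_FPS"
begin

definition prefix_free :: "bit list set \<Rightarrow> bool" where
  "prefix_free C \<longleftrightarrow> (\<forall>a\<in>C. \<forall>b\<in>C. a \<noteq> b \<longrightarrow> \<not> prefix a b)"

definition cw_poly :: "bit list \<Rightarrow> bit poly" where
  "cw_poly c = (\<Sum>t<length c. monom (c ! t) t)"

abbreviation xpow :: "nat \<Rightarrow> bit poly" where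
  "xpow N \<equiv> monom 1 N"

definition xval :: "bit poly \<Rightarrow> nat" where
  "xval p = (GREATEST L. xpow L dvd p)"

definition is_reduction :: "bit poly \<Rightarrow> bit fps \<Rightarrow> nat \<Rightarrow> bool" where
  "is_reduction Z f N \<longleftrightarrow> degree Z < N \<and> (\<forall>k<N. coeff Z k = fps_nth f k)"

end

theory Submission
  imports Defs
begin

text \<open>Since the code is prefix-free, the two codewords differ at some position t below
  the shorter length, so y_i - y_j has a nonzero coefficient at t and its x-adic valuation
  L is at most t. Subtracting the shares cancels r_0, giving
  s (y_i - y_j) = Z_i - Z_j modulo x^(l_i + l - 1). Dividing by x^L leaves a congruence
  modulo x^(l_i + l - 1 - L), a modulus of degree at least l, whose coefficient
  (y_i - y_j)/x^L is a unit; this determines s modulo x^l, hence s itself.\<close>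

lemma order_0_le_if_coeff_neq_0:
  fixes p :: "'a::idom poly"
  assumes "coeff p t \<noteq> 0"
  shows "order 0 p \<le> t"
proof -
  have "p \<noteq> 0" using assms by auto
  moreover have "\<not> monom 1 (Suc t) dvd p" using assms by (auto simp: monom_1_dvd_iff')
  ultimately show ?thesis by (simp add: monom_1_dvd_iff)
qed

lemma monom_1_dvd_monom_1:
  "m \<le> n \<Longrightarrow> monom (1::'a::comm_semiring_1) m dvd monom 1 n"
  by (metis dvd_triv_left le_add_diff_inverse mult_monom mult_1)

lemma monom_1_dvd_degree_less_eq_0:
  fixes p :: "'a::idom poly"
  assumes "monom 1 n dvd p" "degree p < n"
  shows "p = 0"
  using dvd_imp_degree_le[OF assms(1)] assms(2) by (auto simp: degree_monom_eq)

lemma monom_1_dvd_mult_cancel_order: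
  fixes a d :: "'a::idom poly"
  assumes "monom 1 (order 0 d + k) dvd a * d" "d \<noteq> 0"
  shows "monom 1 k dvd a"
proof (cases "a = 0")
  case False
  with assms show ?thesis by (simp add: monom_1_dvd_iff order_mult)
qed simp

lemma coeff_0_div_monom_order:
  fixes p :: "'a::field poly"
  assumes "p \<noteq> 0"
  shows "coeff (p div monom 1 (order 0 p)) 0 \<noteq> 0"
proof
  let ?L = "order 0 p"
  assume "coeff (p div monom 1 ?L) 0 = 0"
  then have "monom 1 ?L * monom 1 1 dvd monom 1 ?L * (p div monom 1 ?L)"
    by (simp add: monom_1_dvd_iff')
  also have "monom 1 ?L * (p div monom 1 ?L) = p"
    using assms by (simp add: monom_1_dvd_iff)
  finally have "Suc ?L \<le> ?L"
    using assms by (simp add: mult_monom monom_1_dvd_iff)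
  then show False by simp
qed

lemma solution_mod_monom_unique:
  fixes d s s' :: "'a::idom poly"
  assumes "monom 1 N dvd s * d - z" "monom 1 N dvd s' * d - z"
    and "d \<noteq> 0" "order 0 d + n \<le> N" "degree s < n" "degree s' < n"
  shows "s' = s"
proof -
  have "monom 1 N dvd (s' - s) * d"
    using dvd_diff[OF assms(2,1)] by (simp add: algebra_simps)
  with monom_1_dvd_monom_1[OF assms(4)] have "monom 1 (order 0 d + n) dvd (s' - s) * d"
    by (rule dvd_trans)
  then have "monom 1 n dvd s' - s"
    using assms(3) by (rule monom_1_dvd_mult_cancel_order)
  moreover have "degree (s' - s) < n"
    using assms(5,6) degree_diff_le_max[of s' s] by linarith
  ultimately have "s' - s = 0"
    by (rule monom_1_dvd_degree_less_eq_0)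
  then show ?thesis
    by simp
qed

lemma solution_mod_monom_formula:
  fixes d s z u :: "'a::field poly"
  defines "L \<equiv> order 0 d"
  assumes sol: "monom 1 N dvd s * d - z" and "d \<noteq> 0" "L + n \<le> N"
    and inverse: "monom 1 n dvd (d div monom 1 L) * u - 1"
  shows "monom 1 n dvd s - (z div monom 1 L) * u"
proof -
  define D where "D = d div monom 1 L"
  define w where "w = z div monom 1 L"
  have d_eq: "d = monom 1 L * D"
    using \<open>d \<noteq> 0\<close> by (simp add: D_def L_def monom_1_dvd_iff)
  have sol_L: "monom 1 (L + n) dvd s * d - z"
    using monom_1_dvd_monom_1[OF \<open>L + n \<le> N\<close>] sol by (rule dvd_trans)
  with monom_1_dvd_monom_1[OF le_add1] have "monom 1 L dvd s * d - z"
    by (rule dvd_trans)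
  moreover have "monom 1 L dvd s * d"
    using d_eq by simp
  ultimately have "monom 1 L dvd z"
    using dvd_diff[of "monom 1 L" "s * d" "s * d - z"] by simp
  then have "z = monom 1 L * w"
    by (simp add: w_def)
  with d_eq have "s * d - z = monom 1 L * (s * D - w)"
    by (simp add: algebra_simps)
  with sol_L have "monom 1 L * monom 1 n dvd monom 1 L * (s * D - w)"
    by (simp add: mult_monom)
  then have "monom 1 n dvd s * D - w"
    by simp
  moreover have "s - w * u = (s * D - w) * u - s * (D * u - 1)"
    by (simp add: algebra_simps)
  ultimately show ?thesis
    using inverse by (simp add: D_def w_def dvd_diff)
qed

lemma coeff_cw_poly: "coeff (cw_poly c) t = (if t < length c then c ! t else 0)"
  by (auto simp: cw_poly_def coeff_sum coeff_monom)

lemma xval_eq_order: "p \<noteq> 0 \<Longrightarrow> xval p = order 0 p"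
  unfolding xval_def by (rule Greatest_equality) (simp_all add: monom_1_dvd_iff)

lemma prefix_free_cw_poly_diff:
  assumes "prefix_free C" "a \<in> C" "b \<in> C" "a \<noteq> b" "length a \<le> length b"
  obtains t where "t < length a" "coeff (cw_poly a - cw_poly b) t \<noteq> 0"
proof -
  have "\<not> prefix a b"
    using assms(1-4) unfolding prefix_free_def by blast
  then have "take (length a) b \<noteq> a"
    by (metis take_is_prefix)
  then obtain t where "t < length a" "a ! t \<noteq> b ! t"
    using assms(5) by (metis length_take min.absorb2 nth_equalityI nth_take)
  with assms(5) show thesis
    by (intro that[of t]) (auto simp: coeff_cw_poly)
qed

lemma reduction_diff_dvd:
  assumes "is_reduction Z (r + fps_of_poly p) N" "is_reduction Z' (r + fps_of_poly q) N'"
    and "N \<le> N'"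
  shows "xpow N dvd (p - q) - (Z - Z')"
  using assms unfolding is_reduction_def monom_1_dvd_iff' by auto

theorem mainTheorem6:
  fixes C :: "bit list set" and ci cj :: "bit list" and l :: nat
    and r0 :: "bit fps" and s Zi Zj :: "bit poly"
  assumes "l \<ge> 1"
    and "prefix_free C" and "ci \<in> C" and "cj \<in> C" and "ci \<noteq> cj"
    and "length ci \<le> length cj"
    and "degree s < l"
    and "is_reduction Zi (r0 + fps_of_poly (s * cw_poly ci)) (length ci + l - 1)"
    and "is_reduction Zj (r0 + fps_of_poly (s * cw_poly cj)) (length cj + l - 1)"
  shows "xval (cw_poly ci - cw_poly cj) \<le> length ci - 1
    \<and> xpow (length ci + l - 1) dvd (s * (cw_poly ci - cw_poly cj) - (Zi - Zj))
    \<and> (\<forall>s'. degree s' < l \<and>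
          xpow (length ci + l - 1) dvd (s' * (cw_poly ci - cw_poly cj) - (Zi - Zj))
          \<longrightarrow> s' = s)
    \<and> (let L = xval (cw_poly ci - cw_poly cj);
           N = (Zi - Zj) div xpow L;
           D = (cw_poly ci - cw_poly cj) div xpow L
       in coeff D 0 \<noteq> 0
          \<and> (\<forall>u. xpow l dvd (D * u - 1) \<longrightarrow> xpow l dvd (s - N * u)))"
proof -
  define d where "d = cw_poly ci - cw_poly cj"
  obtain t where t: "t < length ci" "coeff d t \<noteq> 0"
    using prefix_free_cw_poly_diff assms(2-6) unfolding d_def by blast
  then have "d \<noteq> 0" and "order 0 d \<le> t"
    using order_0_le_if_coeff_neq_0[OF t(2)] by auto
  then have val: "xval d = order 0 d" "order 0 d \<le> length ci - 1" and
    room: "order 0 d + l \<le> length ci + l - 1"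
    using t(1) xval_eq_order by auto
  have sol: "xpow (length ci + l - 1) dvd s * d - (Zi - Zj)"
    using reduction_diff_dvd[OF assms(8,9)] assms(6) by (simp add: d_def right_diff_distrib)
  show ?thesis
    using val sol coeff_0_div_monom_order[OF \<open>d \<noteq> 0\<close>]
      solution_mod_monom_unique[OF sol _ \<open>d \<noteq> 0\<close> room assms(7)]
      solution_mod_monom_formula[OF sol \<open>d \<noteq> 0\<close> room]
    unfolding Let_def d_def[symmetric] by auto
qed

end
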